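(* Let $\mathfrak g=A_2$ and $n\in\mathbb N$. If $\mu=u_1\lambda_1+u_2\lambda_2\in S_{n\lambda_1,2}$, then $u_1+2u_2\le2n$.
   Context: $A_2=\mathfrak{sl}_3$ with fundamental weights $\lambda_1,\lambda_2$, Weyl group $W$, $\rho=\lambda_1+\lambda_2$, dominant weights $\Lambda^+$. $\Pi_\lambda$ is the set of weights of $V_\lambda$ and $S_{\lambda,a}=[\bigcup_{\sigma\in W}(\sigma(\rho)-\rho+a\Pi_\lambda)]\cap\Lambda^+$. *)

theory Defs
  imports Main
begin

text \<open>Weights of A2 = sl3 in the basis of fundamental weights:
  the pair (a, b) stands for a*lambda_1 + b*lambda_2.\<close>
type_synonym weight = "int \<times> int"

definition wadd :: "weight \<Rightarrow> weight \<Rightarrow> weight" where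
  "wadd p q = (fst p + fst q, snd p + snd q)"

definition wsub :: "weight \<Rightarrow> weight \<Rightarrow> weight" where
  "wsub p q = (fst p - fst q, snd p - snd q)"

definition wscale :: "int \<Rightarrow> weight \<Rightarrow> weight" where
  "wscale c p = (c * fst p, c * snd p)"

text \<open>Simple roots alpha_1 = 2 lambda_1 - lambda_2, alpha_2 = -lambda_1 + 2 lambda_2;
  simple reflections s_i(mu) = mu - <mu, alpha_i^vee> alpha_i.\<close>
definition s1 :: "weight \<Rightarrow> weight" where
  "s1 p = (- fst p, fst p + snd p)"

definition s2 :: "weight \<Rightarrow> weight" where
  "s2 p = (fst p + snd p, - snd p)"

inductive_set weyl :: "(weight \<Rightarrow> weight) set" where
  weyl_id: "id \<in> weyl"
| weyl_s1: "w \<in> weyl \<Longrightarrow> s1 \<circ> w \<in> weyl"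
| weyl_s2: "w \<in> weyl \<Longrightarrow> s2 \<circ> w \<in> weyl"

definition rho :: weight where "rho = (1, 1)"

definition dominant :: "weight \<Rightarrow> bool" where
  "dominant p \<longleftrightarrow> fst p \<ge> 0 \<and> snd p \<ge> 0"

text \<open>Non-negative integer combinations of the simple roots (the cone Q^+).\<close>
definition pos_root_comb :: "weight \<Rightarrow> bool" where
  "pos_root_comb p \<longleftrightarrow> (\<exists>k1 k2 :: nat. p = (2 * int k1 - int k2, 2 * int k2 - int k1))"

text \<open>Set of weights of the irreducible module V_lambda (lambda dominant):
  mu is a weight iff every W-conjugate of mu lies in lambda - Q^+
  (Humphreys, Introduction to Lie algebras, 21.3).\<close>
definition weights_of :: "weight \<Rightarrow> weight set" where
  "weights_of lam = {mu. \<forall>w\<in>weyl. pos_root_comb (wsub lam (w mu))}"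

definition S_set :: "weight \<Rightarrow> int \<Rightarrow> weight set" where
  "S_set lam a = {nu. dominant nu \<and>
     (\<exists>\<sigma>\<in>weyl. \<exists>pi\<in>weights_of lam. nu = wadd (wsub (\<sigma> rho) rho) (wscale a pi))}"

end

theory Submission
  imports Defs
begin

text \<open>The linear functional a + 2b is 3 times the inner product with lambda_2, i.e. 3 times the
  alpha_2-coordinate of a weight. It vanishes on alpha_1 and equals 3 on alpha_2, so it is
  non-negative on Q^+. Hence it is bounded on Pi_lambda by its value at lambda, and
  sigma(rho) - rho lies in -Q^+, which gives the bound on S_{lambda,a}.\<close>

definition lambda2_level :: "weight \<Rightarrow> int" where
  "lambda2_level p = fst p + 2 * snd p"

lemma lambda2_level_wadd [simp]: "lambda2_level (wadd p q) = lambda2_level p + lambda2_level q"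
  by (simp add: lambda2_level_def wadd_def)

lemma lambda2_level_wsub [simp]: "lambda2_level (wsub p q) = lambda2_level p - lambda2_level q"
  by (simp add: lambda2_level_def wsub_def)

lemma lambda2_level_wscale [simp]: "lambda2_level (wscale c p) = c * lambda2_level p"
  by (simp add: lambda2_level_def wscale_def algebra_simps)

lemma lambda2_level_nonneg_if_pos_root_comb:
  assumes "pos_root_comb p"
  shows "0 \<le> lambda2_level p"
  using assms by (auto simp: pos_root_comb_def lambda2_level_def)

lemma lambda2_level_weights_of_le:
  assumes "mu \<in> weights_of lam"
  shows "lambda2_level mu \<le> lambda2_level lam"
proof -
  have "pos_root_comb (wsub lam (id mu))"
    using assms weyl_id by (auto simp: weights_of_def)
  then show ?thesis
    using lambda2_level_nonneg_if_pos_root_comb by fastforce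
qed

lemma weyl_orbit_rho:
  "w \<in> weyl \<Longrightarrow> w rho \<in> {(1, 1), (-1, 2), (2, -1), (1, -2), (-2, 1), (-1, -1)}"
  by (induction rule: weyl.induct) (auto simp: rho_def s1_def s2_def)

lemma lambda2_level_weyl_rho_le:
  assumes "w \<in> weyl"
  shows "lambda2_level (w rho) \<le> lambda2_level rho"
  using weyl_orbit_rho[OF assms] by (auto simp: lambda2_level_def rho_def)

lemma lambda2_level_S_set_le:
  assumes "nu \<in> S_set lam a" and "0 \<le> a"
  shows "lambda2_level nu \<le> a * lambda2_level lam"
proof -
  obtain \<sigma> pi where \<sigma>: "\<sigma> \<in> weyl" and pi: "pi \<in> weights_of lam"
    and nu: "nu = wadd (wsub (\<sigma> rho) rho) (wscale a pi)"
    using assms(1) by (auto simp: S_set_def)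
  have "lambda2_level nu = (lambda2_level (\<sigma> rho) - lambda2_level rho) + a * lambda2_level pi"
    by (simp add: nu)
  also have "\<dots> \<le> a * lambda2_level lam"
    using lambda2_level_weyl_rho_le[OF \<sigma>] mult_left_mono[OF lambda2_level_weights_of_le[OF pi] assms(2)]
    by linarith
  finally show ?thesis .
qed

theorem mainTheorem16:
  fixes n :: nat and u1 u2 :: int
  assumes "(u1, u2) \<in> S_set (int n, 0) 2"
  shows "u1 + 2 * u2 \<le> 2 * int n"
  using lambda2_level_S_set_le[OF assms] by (simp add: lambda2_level_def)

end
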